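(* Let $d\ge 1$, $0<\alpha\le\beta<\infty$, $R>0$ and $\mathbb{A}\in L^\infty(\mathbb{R}^d,\mathcal{M}_{\alpha,\beta})$. Then the function $\mathcal{M}_{\alpha,\beta}\ni A\mapsto \mathrm{Tr}\left(G^{R,\mathbb{A}}(A)\right)$ is concave.
   Context: $\mathcal{M}_{\alpha,\beta}:=\{A\in\mathbb{R}^{d\times d}:\ A^T=A,\ \alpha|\xi|^2\le \xi^TA\xi\le\beta|\xi|^2 \text{ for all }\xi\in\mathbb{R}^d\}$ (a convex set). $B_R$ is the open ball of radius $R$ centered at $0$, $B:=B_1$, $\Gamma_R=\partial B_R$, and $n_R$ is the outward unit normal on $\Gamma_R$. Let $V:=\{v\in L^2_{\rm loc}(\mathbb{R}^d):\ \nabla v\in (L^2(\mathbb{R}^d))^d\}$ and $V_0:=\{v\in V:\ \int_B v=0\}$, a Hilbert space with scalar product $\int_{\mathbb{R}^d}\nabla v\cdot\nabla w$. For $A\in\mathcal{M}_{\alpha,\beta}$ define $\mathbb{A}_{R,A}(x)=\mathbb{A}(x)$ for $x\in B_R$ and $\mathbb{A}_{R,A}(x)=A$ for $x\in\mathbb{R}^d\setminus B_R$. For $p\in\mathbb{R}^d$, let $w_p^{R,\mathbb{A},A}$ be the unique solution in $V_0$ of $-\mathrm{div}\big(\mathbb{A}_{R,A}(p+\nabla w_p^{R,\mathbb{A},A})\big)=0$ in $\mathcal{D}'(\mathbb{R}^d)$; equivalently it is the unique minimizer over $V_0$ of $$J_p^{R,\mathbb{A},A}(v):=\frac{1}{2|B_R|}\int_{B_R}(p+\nabla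 v)^T\mathbb{A}(p+\nabla v)+\frac{1}{2|B_R|}\int_{\mathbb{R}^d\setminus B_R}(\nabla v)^TA\nabla v-\frac{1}{|B_R|}\int_{\Gamma_R}(Ap\cdot n_R)\,v .$$ Set $\mathcal{J}_p^{R,\mathbb{A}}(A):=\min_{v\in V_0}J_p^{R,\mathbb{A},A}(v)$. Then $G^{R,\mathbb{A}}(A)$ denotes the unique symmetric matrix in $\mathbb{R}^{d\times d}$ such that $\frac12 p^TG^{R,\mathbb{A}}(A)p=\mathcal{J}_p^{R,\mathbb{A}}(A)$ for all $p\in\mathbb{R}^d$. *)

theory Defs
  imports "HOL-Analysis.Analysis"
begin

definition partial_deriv :: "(real^'d \<Rightarrow> real) \<Rightarrow> 'd \<Rightarrow> real^'d \<Rightarrow> real" where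
  "partial_deriv f i x = frechet_derivative f (at x) (axis i 1)"

fun Ck :: "nat \<Rightarrow> (real^'d \<Rightarrow> real) \<Rightarrow> bool" where
  "Ck 0 f = continuous_on UNIV f"
| "Ck (Suc k) f = ((\<forall>x. f differentiable (at x)) \<and> (\<forall>i. Ck k (partial_deriv f i)))"

definition smooth_fun :: "(real^'d \<Rightarrow> real) \<Rightarrow> bool" where
  "smooth_fun f \<longleftrightarrow> (\<forall>k. Ck k f)"

definition test_function :: "(real^'d \<Rightarrow> real) \<Rightarrow> bool" where
  "test_function \<phi> \<longleftrightarrow> smooth_fun \<phi> \<and> compact (closure {x. \<phi> x \<noteq> 0})"

definition has_weak_gradient :: "(real^'d \<Rightarrow> real) \<Rightarrow> (real^'d \<Rightarrow> real^'d) \<Rightarrow> bool" where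
  "has_weak_gradient v g \<longleftrightarrow>
     v \<in> borel_measurable lebesgue \<and>
     (\<forall>r>0. set_integrable lebesgue (ball 0 r) (\<lambda>x. (v x)\<^sup>2)) \<and>
     g \<in> borel_measurable lebesgue \<and>
     integrable lebesgue (\<lambda>x. (norm (g x))\<^sup>2) \<and>
     (\<forall>\<phi> i. test_function \<phi> \<longrightarrow>
        (LINT x|lebesgue. v x * partial_deriv \<phi> i x) = - (LINT x|lebesgue. (g x $ i) * \<phi> x))"

definition in_V0 :: "(real^'d \<Rightarrow> real) \<Rightarrow> (real^'d \<Rightarrow> real^'d) \<Rightarrow> bool" where
  "in_V0 v g \<longleftrightarrow> has_weak_gradient v g \<and> (LINT x:ball 0 1|lebesgue. v x) = 0"

definition Mab :: "real \<Rightarrow> real \<Rightarrow> (real^'d^'d) set" where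
  "Mab \<alpha> \<beta> = {A. transpose A = A \<and>
     (\<forall>\<xi>. \<alpha> * (norm \<xi>)\<^sup>2 \<le> \<xi> \<bullet> (A *v \<xi>) \<and> \<xi> \<bullet> (A *v \<xi>) \<le> \<beta> * (norm \<xi>)\<^sup>2)}"

text \<open>The boundary term
  \<integral>_{\<Gamma>_R} (A p \<cdot> n_R) v is written, via the divergence theorem (div(Ap)=0), as
  \<integral>_{B_R} A p \<cdot> \<nabla>v.\<close>
definition Jfun :: "real \<Rightarrow> (real^'d \<Rightarrow> real^'d^'d) \<Rightarrow> real^'d^'d \<Rightarrow> real^'d
                     \<Rightarrow> (real^'d \<Rightarrow> real) \<Rightarrow> (real^'d \<Rightarrow> real^'d) \<Rightarrow> real" where
  "Jfun R \<A> A p v g =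
     (let m = measure lebesgue (ball (0::real^'d) R) in
       1 / (2 * m) * (LINT x:ball 0 R|lebesgue. (p + g x) \<bullet> (\<A> x *v (p + g x)))
     + 1 / (2 * m) * (LINT x:(UNIV - ball 0 R)|lebesgue. g x \<bullet> (A *v g x))
     - 1 / m * (LINT x:ball 0 R|lebesgue. (A *v p) \<bullet> g x))"

text \<open>\<J>_p^{R,\<A>}(A) = min over V_0 of J (the minimum is attained; we use the infimum).\<close>
definition Jmin :: "real \<Rightarrow> (real^'d \<Rightarrow> real^'d^'d) \<Rightarrow> real^'d \<Rightarrow> real^'d^'d \<Rightarrow> real" where
  "Jmin R \<A> p A = Inf {Jfun R \<A> A p v g | v g. in_V0 v g}"

definition Gmat :: "real \<Rightarrow> (real^'d \<Rightarrow> real^'d^'d) \<Rightarrow> real^'d^'d \<Rightarrow> real^'d^'d" where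
  "Gmat R \<A> A = (THE G. transpose G = G \<and> (\<forall>p. 1/2 * (p \<bullet> (G *v p)) = Jmin R \<A> p A))"

end

theory Submission
  imports Defs
begin

text \<open>For fixed \<open>p\<close> and fixed \<open>v \<in> V\<^sub>0\<close> the energy \<open>J\<close> is affine in the exterior matrix \<open>A\<close>, so
  its infimum over \<open>V\<^sub>0\<close> is concave in \<open>A\<close>. Since \<open>V\<^sub>0\<close> is a vector space and \<open>J\<close> is
  quadratic in \<open>(p, \<nabla>v)\<close>, that infimum satisfies the parallelogram law and is 2-homogeneous in
  \<open>p\<close>; being bounded by \<open>C |p|\<^sup>2\<close> it is therefore a quadratic form, and \<open>G(A)\<close> is its
  (well-defined) matrix. Hence \<open>Tr G(A) = 2 \<Sum>\<^sub>i Jmin(e\<^sub>i, A)\<close> is a sum of concave functions.\<close>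

section \<open>Quadratic forms and the parallelogram law\<close>

lemma additive_locally_bounded_eq_mult:
  fixes f :: "real \<Rightarrow> real"
  assumes add: "\<And>s t. f (s + t) = f s + f t"
    and bnd: "\<And>t. 0 \<le> t \<Longrightarrow> t \<le> 1 \<Longrightarrow> \<bar>f t\<bar> \<le> M"
  shows "f t = t * f 1"
proof -
  have f0: "f 0 = 0" using add[of 0 0] by simp
  have f_uminus: "f (- s) = - f s" for s using add[of s "-s"] f0 by simp
  have f_nat: "f (real n * s) = real n * f s" for n s
    by (induction n) (auto simp: f0 distrib_right add)
  have f_int: "f (of_int k) = of_int k * f 1" for k
  proof (cases "k \<ge> 0")
    case True
    then show ?thesis using f_nat[of "nat k" 1] by simp
  next
    case False
    then have "of_int k = - (real (nat (-k)) * 1)" by simp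
    then show ?thesis using f_nat[of "nat (-k)" 1] f_uminus False by simp
  qed
  txt \<open>Multiplying the defect \<open>f t - t f 1\<close> by \<open>n\<close> gives the defect at the fractional part of \<open>n t\<close>,
    which is bounded.\<close>
  have defect_bound: "real n * \<bar>f t - t * f 1\<bar> \<le> M + \<bar>f 1\<bar>" for n
  proof -
    define k where "k = \<lfloor>real n * t\<rfloor>"
    define r where "r = real n * t - of_int k"
    have r: "0 \<le> r" "r \<le> 1" unfolding r_def k_def by linarith+
    have "f (real n * t) = f (of_int k) + f r" using add[of "of_int k" r] by (simp add: r_def)
    then have "real n * f t = of_int k * f 1 + f r" using f_nat f_int by simp
    moreover have "real n * (t * f 1) = of_int k * f 1 + r * f 1" by (simp add: r_def algebra_simps)
    ultimately have "real n * (f t - t * f 1) = f r - r * f 1" by (simp add: algebra_simps)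
    then have "real n * \<bar>f t - t * f 1\<bar> = \<bar>f r - r * f 1\<bar>" by (metis abs_mult abs_of_nat)
    also have "\<dots> \<le> \<bar>f r\<bar> + r * \<bar>f 1\<bar>"
    proof -
      have "\<bar>r * f 1\<bar> = r * \<bar>f 1\<bar>" using r by (simp add: abs_mult)
      then show ?thesis using abs_triangle_ineq4[of "f r" "r * f 1"] by linarith
    qed
    also have "\<dots> \<le> M + \<bar>f 1\<bar>" using bnd[OF r] r by (smt (verit) mult_left_le_one_le abs_ge_zero)
    finally show ?thesis .
  qed
  show ?thesis
  proof (rule ccontr)
    assume "f t \<noteq> t * f 1"
    then have d: "\<bar>f t - t * f 1\<bar> > 0" by simp
    obtain n :: nat where "real n > (M + \<bar>f 1\<bar> + 1) / \<bar>f t - t * f 1\<bar>"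
      using reals_Archimedean2 by blast
    then have "real n * \<bar>f t - t * f 1\<bar> > M + \<bar>f 1\<bar> + 1" using d by (simp add: field_simps)
    with defect_bound[of n] show False by simp
  qed
qed

lemma bilinear_polar_form:
  fixes q :: "'a::real_normed_vector \<Rightarrow> real"
  assumes par: "\<And>x y. q (x + y) + q (x - y) = 2 * q x + 2 * q y"
    and bnd: "\<And>x. \<bar>q x\<bar> \<le> K * (norm x)\<^sup>2"
  shows "bilinear (\<lambda>x y. (q (x + y) - q (x - y)) / 4)"
proof -
  define B where "B x y = (q (x + y) - q (x - y)) / 4" for x y
  have q0: "q 0 = 0" using par[of 0 0] by simp
  have q_uminus: "q (- y) = q y" for y using par[of 0 y] q0 by simp
  have B_sym: "B y x = B x y" for x y
    unfolding B_def using q_uminus[of "x - y"] by (simp add: add.commute)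
  have B_double_add: "B (x + x) (y + z) = 2 * (B x y + B x z)" for x y z
  proof -
    have "q ((x + x) + (y + z)) + q (y - z) = 2 * q (x + y) + 2 * q (x + z)"
      using par[of "x + y" "x + z"] by (simp add: algebra_simps)
    moreover have "q ((x + x) - (y + z)) + q (y - z) = 2 * q (x - y) + 2 * q (x - z)"
      using par[of "x - y" "x - z"] q_uminus[of "y - z"] by (simp add: algebra_simps)
    ultimately show ?thesis unfolding B_def by argo
  qed
  have B_add: "B x (y + z) = B x y + B x z" for x y z
    using B_double_add[of x y z] B_double_add[of x "y + z" 0] by (simp add: B_def[of x 0])
  have B_scaleR: "B x (t *\<^sub>R y) = t * B x y" for x y t
  proof -
    have "\<bar>q (x + s *\<^sub>R y)\<bar> \<le> \<bar>K\<bar> * (norm x + norm y)\<^sup>2" "\<bar>q (x - s *\<^sub>R y)\<bar> \<le> \<bar>K\<bar> * (norm x + norm y)\<^sup>2"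
      if "0 \<le> s" "s \<le> 1" for s
    proof -
      have "s * norm y \<le> norm y" using that mult_left_le_one_le[of "norm y" s] by simp
      then have "norm (x + s *\<^sub>R y) \<le> norm x + norm y" "norm (x - s *\<^sub>R y) \<le> norm x + norm y"
        using norm_triangle_ineq[of x "s *\<^sub>R y"] norm_triangle_ineq4[of x "s *\<^sub>R y"] that by simp_all
      moreover have "\<bar>q u\<bar> \<le> \<bar>K\<bar> * (norm u)\<^sup>2" for u
        using bnd[of u] mult_right_mono[OF abs_ge_self zero_le_power2, of K "norm u"] by linarith
      ultimately show "\<bar>q (x + s *\<^sub>R y)\<bar> \<le> \<bar>K\<bar> * (norm x + norm y)\<^sup>2"
        "\<bar>q (x - s *\<^sub>R y)\<bar> \<le> \<bar>K\<bar> * (norm x + norm y)\<^sup>2"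
        by (meson abs_ge_zero mult_left_mono norm_ge_zero order_trans power_mono)+
    qed
    then have "\<bar>B x (s *\<^sub>R y)\<bar> \<le> \<bar>K\<bar> * (norm x + norm y)\<^sup>2 / 2" if "0 \<le> s" "s \<le> 1" for s
      using that unfolding B_def by (fastforce simp: abs_le_iff)
    then have "B x (t *\<^sub>R y) = t * B x (1 *\<^sub>R y)"
      by (intro additive_locally_bounded_eq_mult[where f = "\<lambda>t. B x (t *\<^sub>R y)"
            and M = "\<bar>K\<bar> * (norm x + norm y)\<^sup>2 / 2"])
        (simp_all add: scaleR_add_left B_add)
    then show ?thesis by simp
  qed
  have "linear (B x)" for x
    by (rule linearI) (simp_all add: B_add B_scaleR)
  moreover have "(\<lambda>x. B x y) = B y" for y
    using B_sym by (simp add: fun_eq_iff)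
  ultimately have "bilinear B"
    unfolding bilinear_def by simp
  then show ?thesis by (simp add: B_def[abs_def])
qed

lemma symmetric_matrix_eqI:
  fixes G H :: "real^'n^'n"
  assumes "transpose G = G" "transpose H = H" and quad: "\<And>p. p \<bullet> (G *v p) = p \<bullet> (H *v p)"
  shows "G = H"
proof -
  define D where "D = G - H"
  have D_sym: "x \<bullet> (D *v y) = y \<bullet> (D *v x)" for x y
  proof -
    have "transpose D = D" using assms(1,2) by (simp add: D_def transpose_def vec_eq_iff)
    then show ?thesis by (metis inner_commute vector_transpose_matrix dot_lmul_matrix)
  qed
  have D_quad: "p \<bullet> (D *v p) = 0" for p
    using quad[of p] by (simp add: D_def matrix_vector_mult_diff_rdistrib inner_diff_right)
  have "x \<bullet> (D *v y) = 0" for x y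
    using D_quad[of "x + y"] D_quad[of x] D_quad[of y] D_sym[of y x]
    by (simp add: matrix_vector_right_distrib inner_add_left inner_add_right)
  then have "D *v y = 0" for y by (metis inner_eq_zero_iff)
  then show ?thesis by (simp add: D_def matrix_eq matrix_vector_mult_diff_rdistrib)
qed

lemma ex1_symmetric_matrix_quadratic_form:
  fixes q :: "real^'n \<Rightarrow> real"
  assumes par: "\<And>x y. q (x + y) + q (x - y) = 2 * q x + 2 * q y"
    and bnd: "\<And>x. \<bar>q x\<bar> \<le> K * (norm x)\<^sup>2"
  shows "\<exists>!G. transpose G = G \<and> (\<forall>p. 1/2 * (p \<bullet> (G *v p)) = q p)"
proof (rule ex_ex1I)
  define B where "B x y = (q (x + y) - q (x - y)) / 4" for x y
  have bil: "bilinear B" unfolding B_def[abs_def] using bilinear_polar_form[OF par bnd] .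
  have B_sym: "B y x = B x y" for x y
    using par[of 0 "x - y"] par[of 0 0] by (simp add: B_def add.commute)
  define G :: "real^'n^'n" where "G = (\<chi> i j. 2 * B (axis i 1) (axis j 1))"
  have "q p = B p p" for p using par[of p p] par[of 0 0] by (simp add: B_def)
  also have "B p p = (\<Sum>i\<in>UNIV. \<Sum>j\<in>UNIV. p $ i * p $ j * B (axis i 1) (axis j 1))" for p
  proof -
    have p: "p = (\<Sum>i\<in>UNIV. p $ i *\<^sub>R axis i 1)"
      using basis_expansion[of p] by (simp add: scalar_mult_eq_scaleR)
    have "B p p = B (\<Sum>i\<in>UNIV. p $ i *\<^sub>R axis i 1) (\<Sum>j\<in>UNIV. p $ j *\<^sub>R axis j 1)"
      using p by simp
    then show ?thesis
      unfolding bilinear_sum[OF bil] sum.cartesian_product[symmetric]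
      by (simp add: bilinear_lmul[OF bil] bilinear_rmul[OF bil] algebra_simps)
  qed
  also have "(\<Sum>i\<in>UNIV. \<Sum>j\<in>UNIV. p $ i * p $ j * B (axis i 1) (axis j 1)) = 1/2 * (p \<bullet> (G *v p))" for p
    unfolding G_def by (simp add: inner_vec_def matrix_vector_mult_def sum_distrib_left algebra_simps)
  finally have "\<forall>p. 1/2 * (p \<bullet> (G *v p)) = q p" by simp
  moreover have "transpose G = G" by (simp add: G_def transpose_def vec_eq_iff B_sym)
  ultimately show "\<exists>G. transpose G = G \<and> (\<forall>p. 1/2 * (p \<bullet> (G *v p)) = q p)" by blast
qed (rule symmetric_matrix_eqI; auto)

lemma concave_on_sum_functions:
  assumes "finite I" "convex S" "\<And>i. i \<in> I \<Longrightarrow> concave_on S (f i)"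
  shows "concave_on S (\<lambda>x. \<Sum>i\<in>I. f i x)"
  using assms by (induction I rule: finite_induct) (auto simp: concave_on_const intro: concave_on_add)

lemma borel_measurable_matrix_vector_mult [measurable]:
  fixes F :: "'a \<Rightarrow> real^'n^'m" and u :: "'a \<Rightarrow> real^'n"
  assumes "F \<in> borel_measurable M" "u \<in> borel_measurable M"
  shows "(\<lambda>x. F x *v u x) \<in> borel_measurable M"
proof -
  have "bilinear (\<lambda>(A :: real^'n^'m) (x :: real^'n). A *v x)"
    unfolding bilinear_def
    by (auto intro!: linearI simp: matrix_vector_right_distrib matrix_vector_mult_scaleR
        matrix_vector_mult_add_rdistrib scaleR_matrix_vector_assoc)
  then have "continuous_on UNIV (\<lambda>x :: (real^'n^'m) \<times> (real^'n). fst x *v snd x)"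
    by (intro bounded_bilinear.continuous_on[of "\<lambda>A x. A *v x"] continuous_intros)
      (simp add: bilinear_conv_bounded_bilinear)
  with assms show ?thesis by (rule borel_measurable_continuous_Pair)
qed

lemma lebesgue_ball_finite:
  fixes a :: "'a::euclidean_space"
  shows "ball a r \<in> sets lebesgue" "emeasure lebesgue (ball a r) < \<infinity>"
  using lmeasurable_ball[of a r] by (auto simp: fmeasurable_def)

lemma integrable_indicator_ball:
  "integrable lebesgue (indicator (ball a r) :: 'a::euclidean_space \<Rightarrow> real)"
  using lebesgue_ball_finite by (rule integrable_real_indicator)

lemma abs_le_one_plus_square: "\<bar>a::real\<bar> \<le> 1 + a\<^sup>2"
proof (cases "\<bar>a\<bar> \<le> 1")
  case False
  then have "\<bar>a\<bar> * 1 \<le> \<bar>a\<bar> * \<bar>a\<bar>" by (intro mult_left_mono) auto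
  then show ?thesis by (simp add: power2_eq_square abs_mult[symmetric])
qed (simp add: add_increasing2)

lemma set_integrable_of_square:
  fixes f :: "'a \<Rightarrow> real"
  assumes "f \<in> borel_measurable M" "S \<in> sets M" "emeasure M S < \<infinity>"
    and "set_integrable M S (\<lambda>x. (f x)\<^sup>2)"
  shows "set_integrable M S f"
proof (rule set_integrable_bound)
  show "set_integrable M S (\<lambda>x. 1 + (f x)\<^sup>2)"
    using assms(2-4) by (simp add: set_integrable_def distrib_left)
  show "set_borel_measurable M S f"
    using assms(1,2) unfolding set_borel_measurable_def by measurable
  show "AE x in M. x \<in> S \<longrightarrow> norm (f x) \<le> norm (1 + (f x)\<^sup>2)"
    using abs_le_one_plus_square by (intro AE_I2) simp
qed

lemma continuous_compact_support_bounded: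
  fixes h :: "'a::topological_space \<Rightarrow> real"
  assumes "continuous_on UNIV h" "compact K" "\<And>x. x \<notin> K \<Longrightarrow> h x = 0"
  obtains M where "\<And>x. \<bar>h x\<bar> \<le> M"
proof -
  have "compact (h ` K)" using assms(1,2) by (meson compact_continuous_image continuous_on_subset subset_UNIV)
  then obtain M where "\<And>y. y \<in> h ` K \<Longrightarrow> norm y \<le> M"
    using compact_imp_bounded bounded_iff by metis
  then have "\<bar>h x\<bar> \<le> max M 0" for x using assms(3)[of x] by (cases "x \<in> K") force+
  then show ?thesis using that by blast
qed

lemma integrable_mult_compact_support:
  fixes f h :: "real^'d \<Rightarrow> real"
  assumes f: "f \<in> borel_measurable lebesgue" "\<And>r. r > 0 \<Longrightarrow> set_integrable lebesgue (ball 0 r) (\<lambda>x. (f x)\<^sup>2)"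
    and h: "h \<in> borel_measurable lebesgue" "\<And>x. \<bar>h x\<bar> \<le> M" "compact K" "\<And>x. x \<notin> K \<Longrightarrow> h x = 0"
  shows "integrable lebesgue (\<lambda>x. f x * h x)"
proof -
  obtain r where r: "r > 0" "K \<subseteq> ball 0 r"
    using compact_imp_bounded[OF h(3)] bounded_subset_ballD by blast
  have "set_integrable lebesgue (ball 0 r) f"
    by (rule set_integrable_of_square[OF f(1) lebesgue_ball_finite f(2)[OF r(1)]])
  then have "integrable lebesgue (\<lambda>x. \<bar>M\<bar> * (indicator (ball 0 r) x * f x))"
    unfolding set_integrable_def by simp
  then show ?thesis
  proof (rule Bochner_Integration.integrable_bound)
    show "(\<lambda>x. f x * h x) \<in> borel_measurable lebesgue" using f(1) h(1) by measurable
    have "\<bar>f x * h x\<bar> \<le> \<bar>M\<bar> * \<bar>indicator (ball 0 r) x * f x\<bar>" for x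
    proof (cases "x \<in> ball 0 r")
      case True
      have "\<bar>h x\<bar> \<le> \<bar>M\<bar>" using h(2)[of x] by linarith
      from mult_left_mono[OF this abs_ge_zero[of "f x"]]
      show ?thesis using True by (simp add: abs_mult mult.commute)
    next
      case False
      then have "x \<notin> K" using r(2) by blast
      then show ?thesis using h(4) by simp
    qed
    then show "AE x in lebesgue. norm (f x * h x) \<le> norm (\<bar>M\<bar> * (indicator (ball 0 r) x * f x))"
      by (simp add: abs_mult)
  qed
qed

lemma test_function_compact_support:
  fixes \<phi> :: "real^'d \<Rightarrow> real"
  assumes "test_function \<phi>"
  shows "continuous_on UNIV \<phi>" "continuous_on UNIV (partial_deriv \<phi> i)"
    and "compact (closure {x. \<phi> x \<noteq> 0})"
    and "x \<notin> closure {x. \<phi> x \<noteq> 0} \<Longrightarrow> \<phi> x = 0"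
    and "x \<notin> closure {x. \<phi> x \<noteq> 0} \<Longrightarrow> partial_deriv \<phi> i x = 0"
proof -
  have smooth: "Ck k \<phi>" for k using assms by (simp add: test_function_def smooth_fun_def)
  show "continuous_on UNIV \<phi>" using smooth[of 0] by simp
  show "continuous_on UNIV (partial_deriv \<phi> i)" using smooth[of "Suc 0"] by simp
  show "compact (closure {x. \<phi> x \<noteq> 0})" using assms by (simp add: test_function_def)
  show vanish: "\<phi> y = 0" if "y \<notin> closure {x. \<phi> x \<noteq> 0}" for y
  proof (rule ccontr)
    assume "\<phi> y \<noteq> 0"
    then show False using that closure_subset[of "{x. \<phi> x \<noteq> 0}"] by (simp add: subset_iff)
  qed
  show "partial_deriv \<phi> i y = 0" if y: "y \<notin> closure {x. \<phi> x \<noteq> 0}" for y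
  proof -
    define U where "U = - closure {x. \<phi> x \<noteq> 0}"
    have "open U" "y \<in> U" using y by (auto simp: U_def)
    moreover have "\<phi> z = 0" if "z \<in> U" for z by (rule vanish) (use that in \<open>simp add: U_def\<close>)
    ultimately have "(\<phi> has_derivative (\<lambda>_. 0)) (at y)"
      by (intro has_derivative_transform_within_open[OF has_derivative_const[of 0]]) auto
    then show ?thesis by (simp add: partial_deriv_def frechet_derivative_at[symmetric])
  qed
qed

lemma set_integrable_component_square:
  fixes g :: "'a \<Rightarrow> real^'d"
  assumes "g \<in> borel_measurable M" "integrable M (\<lambda>x. (norm (g x))\<^sup>2)" "S \<in> sets M"
  shows "set_integrable M S (\<lambda>x. (g x $ i)\<^sup>2)"
  unfolding set_integrable_def
proof (rule Bochner_Integration.integrable_bound[OF assms(2)])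
  show "(\<lambda>x. indicator S x *\<^sub>R (g x $ i)\<^sup>2) \<in> borel_measurable M"
    using assms(1,3) measurable_compose[OF assms(1) borel_measurable_nth] by measurable
  have "(g x $ i)\<^sup>2 \<le> (norm (g x))\<^sup>2" for x
    using component_le_norm_cart[of "g x" i] by (metis abs_ge_zero power2_abs power_mono)
  then show "AE x in M. norm (indicator S x *\<^sub>R (g x $ i)\<^sup>2) \<le> norm ((norm (g x))\<^sup>2)"
    by (intro AE_I2) (simp add: indicator_def)
qed

section \<open>Weak gradients and the space \<open>V\<^sub>0\<close>\<close>

lemma integrable_weak_gradient_test_function:
  fixes v :: "real^'d \<Rightarrow> real"
  assumes "has_weak_gradient v g" "test_function \<phi>"
  shows "integrable lebesgue (\<lambda>x. v x * partial_deriv \<phi> i x)"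
    and "integrable lebesgue (\<lambda>x. g x $ i * \<phi> x)"
proof -
  note \<phi> = test_function_compact_support[OF assms(2)]
  have meas: "\<phi> \<in> borel_measurable lebesgue" "partial_deriv \<phi> i \<in> borel_measurable lebesgue"
    using continuous_imp_measurable_on_sets_lebesgue[OF \<phi>(1)]
      continuous_imp_measurable_on_sets_lebesgue[OF \<phi>(2)] by simp_all
  obtain M1 where M1: "\<And>x. \<bar>partial_deriv \<phi> i x\<bar> \<le> M1"
    using continuous_compact_support_bounded[OF \<phi>(2,3,5)] by blast
  obtain M2 where M2: "\<And>x. \<bar>\<phi> x\<bar> \<le> M2"
    using continuous_compact_support_bounded[OF \<phi>(1,3,4)] by blast
  have v: "v \<in> borel_measurable lebesgue" "\<And>r. r > 0 \<Longrightarrow> set_integrable lebesgue (ball 0 r) (\<lambda>x. (v x)\<^sup>2)"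
    and g: "g \<in> borel_measurable lebesgue" "integrable lebesgue (\<lambda>x. (norm (g x))\<^sup>2)"
    using assms(1) by (auto simp: has_weak_gradient_def)
  show "integrable lebesgue (\<lambda>x. v x * partial_deriv \<phi> i x)"
    by (rule integrable_mult_compact_support[OF v meas(2) M1 \<phi>(3,5)])
  show "integrable lebesgue (\<lambda>x. g x $ i * \<phi> x)"
    using measurable_compose[OF g(1) borel_measurable_nth] set_integrable_component_square[OF g]
    by (intro integrable_mult_compact_support[OF _ _ meas(1) M2 \<phi>(3,4)]) auto
qed

lemma square_add_le: "((x::real) + y)\<^sup>2 \<le> 2 * x\<^sup>2 + 2 * y\<^sup>2"
proof -
  have "0 \<le> (x - y)\<^sup>2" by simp
  then show ?thesis by (simp add: power2_eq_square algebra_simps)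
qed

lemma has_weak_gradient_lincomb:
  fixes v w :: "real^'d \<Rightarrow> real"
  assumes hv: "has_weak_gradient v g" and hw: "has_weak_gradient w h"
  shows "has_weak_gradient (\<lambda>x. a * v x + b * w x) (\<lambda>x. a *\<^sub>R g x + b *\<^sub>R h x)"
proof -
  have v: "v \<in> borel_measurable lebesgue" "\<And>r. r > 0 \<Longrightarrow> set_integrable lebesgue (ball 0 r) (\<lambda>x. (v x)\<^sup>2)"
    and g: "g \<in> borel_measurable lebesgue" "integrable lebesgue (\<lambda>x. (norm (g x))\<^sup>2)"
    and v_weak: "\<And>\<phi> i. test_function \<phi> \<Longrightarrow>
      (LINT x|lebesgue. v x * partial_deriv \<phi> i x) = - (LINT x|lebesgue. g x $ i * \<phi> x)"
    using hv by (auto simp: has_weak_gradient_def)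
  have w: "w \<in> borel_measurable lebesgue" "\<And>r. r > 0 \<Longrightarrow> set_integrable lebesgue (ball 0 r) (\<lambda>x. (w x)\<^sup>2)"
    and h: "h \<in> borel_measurable lebesgue" "integrable lebesgue (\<lambda>x. (norm (h x))\<^sup>2)"
    and w_weak: "\<And>\<phi> i. test_function \<phi> \<Longrightarrow>
      (LINT x|lebesgue. w x * partial_deriv \<phi> i x) = - (LINT x|lebesgue. h x $ i * \<phi> x)"
    using hw by (auto simp: has_weak_gradient_def)
  have L2_loc: "set_integrable lebesgue (ball 0 r) (\<lambda>x. (a * v x + b * w x)\<^sup>2)" if "r > 0" for r
  proof (rule set_integrable_bound)
    show "set_integrable lebesgue (ball 0 r) (\<lambda>x. 2 * a\<^sup>2 * (v x)\<^sup>2 + 2 * b\<^sup>2 * (w x)\<^sup>2)"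
      using v(2)[OF that] w(2)[OF that] by (intro set_integral_add(1) set_integrable_mult_right) auto
    show "set_borel_measurable lebesgue (ball 0 r) (\<lambda>x. (a * v x + b * w x)\<^sup>2)"
      unfolding set_borel_measurable_def using v(1) w(1) lebesgue_ball_finite(1) by measurable
    show "AE x in lebesgue. x \<in> ball 0 r \<longrightarrow>
        norm ((a * v x + b * w x)\<^sup>2) \<le> norm (2 * a\<^sup>2 * (v x)\<^sup>2 + 2 * b\<^sup>2 * (w x)\<^sup>2)"
    proof (intro AE_I2 impI)
      fix x
      show "norm ((a * v x + b * w x)\<^sup>2) \<le> norm (2 * a\<^sup>2 * (v x)\<^sup>2 + 2 * b\<^sup>2 * (w x)\<^sup>2)"
        using square_add_le[of "a * v x" "b * w x"] by (simp add: power_mult_distrib)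
    qed
  qed
  have L2: "integrable lebesgue (\<lambda>x. (norm (a *\<^sub>R g x + b *\<^sub>R h x))\<^sup>2)"
  proof (rule Bochner_Integration.integrable_bound)
    show "integrable lebesgue (\<lambda>x. 2 * a\<^sup>2 * (norm (g x))\<^sup>2 + 2 * b\<^sup>2 * (norm (h x))\<^sup>2)"
      using g(2) h(2) by auto
    show "(\<lambda>x. (norm (a *\<^sub>R g x + b *\<^sub>R h x))\<^sup>2) \<in> borel_measurable lebesgue"
      using g(1) h(1) by measurable
    have "(norm (a *\<^sub>R g x + b *\<^sub>R h x))\<^sup>2 \<le> 2 * a\<^sup>2 * (norm (g x))\<^sup>2 + 2 * b\<^sup>2 * (norm (h x))\<^sup>2" for x
    proof -
      have "(norm (a *\<^sub>R g x + b *\<^sub>R h x))\<^sup>2 \<le> (\<bar>a\<bar> * norm (g x) + \<bar>b\<bar> * norm (h x))\<^sup>2"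
        using norm_triangle_ineq[of "a *\<^sub>R g x" "b *\<^sub>R h x"] by (intro power_mono) auto
      also have "\<dots> \<le> 2 * a\<^sup>2 * (norm (g x))\<^sup>2 + 2 * b\<^sup>2 * (norm (h x))\<^sup>2"
        using square_add_le[of "\<bar>a\<bar> * norm (g x)" "\<bar>b\<bar> * norm (h x)"] by (simp add: power_mult_distrib)
      finally show ?thesis .
    qed
    then show "AE x in lebesgue. norm ((norm (a *\<^sub>R g x + b *\<^sub>R h x))\<^sup>2) \<le>
        norm (2 * a\<^sup>2 * (norm (g x))\<^sup>2 + 2 * b\<^sup>2 * (norm (h x))\<^sup>2)"
      by (intro AE_I2) simp
  qed
  have weak: "(LINT x|lebesgue. (a * v x + b * w x) * partial_deriv \<phi> i x) =
      - (LINT x|lebesgue. (a *\<^sub>R g x + b *\<^sub>R h x) $ i * \<phi> x)" if "test_function \<phi>" for \<phi> i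
  proof -
    note iv = integrable_weak_gradient_test_function[OF hv that, of i]
      and iw = integrable_weak_gradient_test_function[OF hw that, of i]
    have "(LINT x|lebesgue. (a * v x + b * w x) * partial_deriv \<phi> i x)
        = a * (LINT x|lebesgue. v x * partial_deriv \<phi> i x) + b * (LINT x|lebesgue. w x * partial_deriv \<phi> i x)"
      using iv(1) iw(1) by (simp add: distrib_right mult.assoc)
    also have "\<dots> = - (a * (LINT x|lebesgue. g x $ i * \<phi> x) + b * (LINT x|lebesgue. h x $ i * \<phi> x))"
      using v_weak[OF that] w_weak[OF that] by simp
    also have "\<dots> = - (LINT x|lebesgue. (a *\<^sub>R g x + b *\<^sub>R h x) $ i * \<phi> x)"
      using iv(2) iw(2) by (simp add: distrib_right mult.assoc)
    finally show ?thesis .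
  qed
  have "(\<lambda>x. a * v x + b * w x) \<in> borel_measurable lebesgue" using v(1) w(1) by measurable
  moreover have "(\<lambda>x. a *\<^sub>R g x + b *\<^sub>R h x) \<in> borel_measurable lebesgue" using g(1) h(1) by measurable
  ultimately show ?thesis
    unfolding has_weak_gradient_def by (intro conjI allI impI L2_loc L2 weak)
qed

lemma set_integrable_unit_ball_weak_gradient:
  assumes "has_weak_gradient v g"
  shows "set_integrable lebesgue (ball 0 1) v"
proof -
  have "v \<in> borel_measurable lebesgue" "set_integrable lebesgue (ball 0 1) (\<lambda>x. (v x)\<^sup>2)"
    using assms by (simp_all add: has_weak_gradient_def)
  from this(1) lebesgue_ball_finite this(2) show ?thesis by (rule set_integrable_of_square)
qed

lemma in_V0_lincomb:
  assumes "in_V0 v g" "in_V0 w h"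
  shows "in_V0 (\<lambda>x. a * v x + b * w x) (\<lambda>x. a *\<^sub>R g x + b *\<^sub>R h x)"
proof -
  have hv: "has_weak_gradient v g" and hw: "has_weak_gradient w h"
    and "(LINT x:ball 0 1|lebesgue. v x) = 0" "(LINT x:ball 0 1|lebesgue. w x) = 0"
    using assms by (auto simp: in_V0_def)
  then have "(LINT x:ball 0 1|lebesgue. a * v x + b * w x) = 0"
    using set_integrable_unit_ball_weak_gradient[OF hv] set_integrable_unit_ball_weak_gradient[OF hw]
    by simp
  then show ?thesis unfolding in_V0_def using has_weak_gradient_lincomb[OF hv hw] by simp
qed

lemma in_V0_zero: "in_V0 (\<lambda>x. 0) (\<lambda>x. 0)"
  by (simp add: in_V0_def has_weak_gradient_def set_integrable_def)

lemma in_V0_add: "in_V0 v g \<Longrightarrow> in_V0 w h \<Longrightarrow> in_V0 (\<lambda>x. v x + w x) (\<lambda>x. g x + h x)"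
  using in_V0_lincomb[of v g w h 1 1] by simp

lemma in_V0_diff: "in_V0 v g \<Longrightarrow> in_V0 w h \<Longrightarrow> in_V0 (\<lambda>x. v x - w x) (\<lambda>x. g x - h x)"
  using in_V0_lincomb[of v g w h 1 "-1"] by simp

lemma in_V0_scale: "in_V0 v g \<Longrightarrow> in_V0 (\<lambda>x. c * v x) (\<lambda>x. c *\<^sub>R g x)"
  using in_V0_lincomb[OF _ in_V0_zero, of v g c 0] by simp

lemma in_V0_gradient_square_integrable:
  "in_V0 v g \<Longrightarrow> g \<in> borel_measurable lebesgue \<and> integrable lebesgue (\<lambda>x. (norm (g x))\<^sup>2)"
  by (simp add: in_V0_def has_weak_gradient_def)

lemma Mab_bounds:
  assumes "A \<in> Mab \<alpha> \<beta>"
  shows "\<alpha> * (norm u)\<^sup>2 \<le> u \<bullet> (A *v u)" "u \<bullet> (A *v u) \<le> \<beta> * (norm u)\<^sup>2"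
  using assms by (auto simp: Mab_def)

lemma quadratic_form_convex_combination:
  fixes A1 A2 :: "real^'n^'n"
  shows "\<xi> \<bullet> ((u *\<^sub>R A1 + w *\<^sub>R A2) *v \<xi>) = u * (\<xi> \<bullet> (A1 *v \<xi>)) + w * (\<xi> \<bullet> (A2 *v \<xi>))"
  by (simp add: matrix_vector_mult_add_rdistrib scaleR_matrix_vector_assoc[symmetric] inner_add_right)

lemma convex_Mab: "convex (Mab \<alpha> \<beta> :: (real^'d^'d) set)"
  unfolding convex_def
proof (intro ballI allI impI)
  fix A1 A2 :: "real^'d^'d" and u w :: real
  assume A: "A1 \<in> Mab \<alpha> \<beta>" "A2 \<in> Mab \<alpha> \<beta>" and uw: "0 \<le> u" "0 \<le> w" "u + w = 1"
  have "transpose (u *\<^sub>R A1 + w *\<^sub>R A2) = u *\<^sub>R A1 + w *\<^sub>R A2"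
    using A by (simp add: Mab_def transpose_def vec_eq_iff)
  moreover have "c = u * c + w * c" for c :: real using uw(3) by (metis distrib_right mult_1)
  then have "\<alpha> * (norm \<xi>)\<^sup>2 \<le> \<xi> \<bullet> ((u *\<^sub>R A1 + w *\<^sub>R A2) *v \<xi>) \<and>
      \<xi> \<bullet> ((u *\<^sub>R A1 + w *\<^sub>R A2) *v \<xi>) \<le> \<beta> * (norm \<xi>)\<^sup>2" for \<xi>
    unfolding quadratic_form_convex_combination using Mab_bounds[OF A(1), of \<xi>] Mab_bounds[OF A(2), of \<xi>] uw
    by (metis add_mono mult_left_mono)
  ultimately show "u *\<^sub>R A1 + w *\<^sub>R A2 \<in> Mab \<alpha> \<beta>" by (simp add: Mab_def)
qed

lemma quadratic_form_parallelogram: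
  fixes M :: "real^'n^'n"
  shows "(u + w) \<bullet> (M *v (u + w)) + (u - w) \<bullet> (M *v (u - w)) = 2 * (u \<bullet> (M *v u)) + 2 * (w \<bullet> (M *v w))"
  by (simp add: matrix_vector_right_distrib matrix_vector_mult_diff_distrib inner_add_left
      inner_add_right inner_diff_left inner_diff_right algebra_simps)

text \<open>The integrand of \<open>2 |B\<^sub>R| J\<close>, the boundary term being already moved into the ball.\<close>

definition energy_density ::
    "real \<Rightarrow> (real^'d \<Rightarrow> real^'d^'d) \<Rightarrow> real^'d^'d \<Rightarrow> real^'d \<Rightarrow> (real^'d \<Rightarrow> real^'d) \<Rightarrow> real^'d \<Rightarrow> real"
  where "energy_density R \<A> A p g x =
    (if x \<in> ball 0 R then (p + g x) \<bullet> (\<A> x *v (p + g x)) - 2 * ((A *v p) \<bullet> g x)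
     else g x \<bullet> (A *v g x))"

lemma energy_density_parallelogram:
  "energy_density R \<A> A (p + p') (\<lambda>x. g x + h x) x + energy_density R \<A> A (p - p') (\<lambda>x. g x - h x) x
    = 2 * energy_density R \<A> A p g x + 2 * energy_density R \<A> A p' h x"
proof -
  have "p + p' + (g x + h x) = (p + g x) + (p' + h x)" "p - p' + (g x - h x) = (p + g x) - (p' + h x)"
    by (simp_all add: algebra_simps)
  then show ?thesis
    unfolding energy_density_def
    using quadratic_form_parallelogram[of "p + g x" "p' + h x" "\<A> x"] quadratic_form_parallelogram[of "g x" "h x" A]
    by (simp add: matrix_vector_right_distrib matrix_vector_mult_diff_distrib inner_add_left
        inner_add_right inner_diff_left inner_diff_right algebra_simps)
qed

lemma energy_density_scaleR:
  "energy_density R \<A> A (c *\<^sub>R p) (\<lambda>x. c *\<^sub>R g x) x = c\<^sup>2 * energy_density R \<A> A p g x"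
  unfolding energy_density_def
  by (simp add: scaleR_add_right[symmetric] matrix_vector_mult_scaleR power2_eq_square algebra_simps
      del: scaleR_add_right)

lemma energy_density_convex_combination:
  assumes "u + w = 1"
  shows "energy_density R \<A> (u *\<^sub>R A1 + w *\<^sub>R A2) p g x
    = u * energy_density R \<A> A1 p g x + w * energy_density R \<A> A2 p g x"
proof -
  have w: "w = 1 - u" using assms by simp
  have "((u *\<^sub>R A1 + w *\<^sub>R A2) *v p) \<bullet> g x = u * ((A1 *v p) \<bullet> g x) + w * ((A2 *v p) \<bullet> g x)"
    by (simp add: matrix_vector_mult_add_rdistrib scaleR_matrix_vector_assoc[symmetric] inner_add_left)
  then show ?thesis
    unfolding energy_density_def quadratic_form_convex_combination by (simp add: w algebra_simps)
qed

lemma energy_density_lower_bound: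
  assumes "0 < \<alpha>" and "\<A> x \<in> Mab \<alpha> \<beta>" and A: "A \<in> Mab \<alpha> \<beta>"
  shows "- indicator (ball 0 R) x * ((norm (A *v p))\<^sup>2 / \<alpha>) \<le> energy_density R \<A> A p g x"
proof (cases "x \<in> ball 0 R")
  case True
  define u where "u = p + g x"
  have "0 \<le> \<alpha> * (norm p)\<^sup>2" using assms(1) by simp
  also have "\<dots> \<le> (A *v p) \<bullet> p" using Mab_bounds(1)[OF A] by (simp add: inner_commute)
  finally have Ap: "0 \<le> (A *v p) \<bullet> p" .
  txt \<open>Complete the square: \<open>2 Ap\<cdot>u \<le> \<alpha>|u|\<^sup>2 + |Ap|\<^sup>2/\<alpha>\<close>.\<close>
  have "0 \<le> (\<alpha> * norm u - norm (A *v p))\<^sup>2 / \<alpha>" using assms(1) by simp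
  also have "\<dots> = \<alpha> * (norm u)\<^sup>2 - 2 * (norm (A *v p) * norm u) + (norm (A *v p))\<^sup>2 / \<alpha>"
    using assms(1) by (simp add: power2_eq_square field_simps)
  finally have "2 * ((A *v p) \<bullet> u) \<le> u \<bullet> (\<A> x *v u) + (norm (A *v p))\<^sup>2 / \<alpha>"
    using norm_cauchy_schwarz[of "A *v p" u] Mab_bounds(1)[OF assms(2), of u] by linarith
  then show ?thesis
    using True Ap by (simp add: energy_density_def u_def inner_add_right)
next
  case False
  have "0 \<le> \<alpha> * (norm (g x))\<^sup>2" using assms(1) by simp
  then show ?thesis
    using False Mab_bounds(1)[OF A, of "g x"] by (simp add: energy_density_def)
qed

section \<open>The energy functional\<close>

lemma integrable_quadratic_form:
  fixes g :: "'a \<Rightarrow> real^'d"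
  assumes A: "A \<in> Mab \<alpha> \<beta>" and "0 \<le> \<alpha>"
    and g: "g \<in> borel_measurable M" "integrable M (\<lambda>x. (norm (g x))\<^sup>2)"
  shows "integrable M (\<lambda>x. g x \<bullet> (A *v g x))"
proof (rule Bochner_Integration.integrable_bound)
  show "integrable M (\<lambda>x. \<beta> * (norm (g x))\<^sup>2)" using g(2) by simp
  show "(\<lambda>x. g x \<bullet> (A *v g x)) \<in> borel_measurable M" using g(1) by measurable
  have "\<bar>g x \<bullet> (A *v g x)\<bar> \<le> \<beta> * (norm (g x))\<^sup>2" for x
  proof -
    have "0 \<le> \<alpha> * (norm (g x))\<^sup>2" using assms(2) by simp
    then show ?thesis using Mab_bounds[OF A, of "g x"] by linarith
  qed
  then show "AE x in M. norm (g x \<bullet> (A *v g x)) \<le> norm (\<beta> * (norm (g x))\<^sup>2)"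
    by (intro AE_I2) (metis abs_ge_self order_trans real_norm_def)
qed

lemma set_integrable_const_add_square_norm:
  assumes "S \<in> sets M" "emeasure M S < \<infinity>" "integrable M (\<lambda>x. (norm (g x))\<^sup>2)"
  shows "set_integrable M S (\<lambda>x. a + b * (norm (g x))\<^sup>2)"
  unfolding set_integrable_def
  using Bochner_Integration.integrable_add[OF
      integrable_mult_left[OF integrable_real_indicator[OF assms(1,2)], of a]
      integrable_mult_indicator[OF assms(1) integrable_mult_right[OF assms(3), of b]]]
  by (simp add: distrib_left)

lemma set_integrable_inner:
  fixes g :: "'a \<Rightarrow> real^'d"
  assumes "S \<in> sets M" "emeasure M S < \<infinity>"
    and g: "g \<in> borel_measurable M" "integrable M (\<lambda>x. (norm (g x))\<^sup>2)"
  shows "set_integrable M S (\<lambda>x. c \<bullet> g x)"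
proof (rule set_integrable_bound)
  show "set_integrable M S (\<lambda>x. norm c + norm c * (norm (g x))\<^sup>2)"
    using assms by (intro set_integrable_const_add_square_norm)
  show "set_borel_measurable M S (\<lambda>x. c \<bullet> g x)"
    unfolding set_borel_measurable_def using assms(1) g(1) by measurable
  have "\<bar>c \<bullet> g x\<bar> \<le> norm c + norm c * (norm (g x))\<^sup>2" for x
  proof -
    have "\<bar>c \<bullet> g x\<bar> \<le> norm c * norm (g x)" by (rule Cauchy_Schwarz_ineq2)
    also have "\<dots> \<le> norm c * (1 + (norm (g x))\<^sup>2)"
      using abs_le_one_plus_square[of "norm (g x)"] by (intro mult_left_mono) auto
    finally show ?thesis by (simp add: algebra_simps)
  qed
  then show "AE x in M. x \<in> S \<longrightarrow> norm (c \<bullet> g x) \<le> norm (norm c + norm c * (norm (g x))\<^sup>2)"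
    by (intro AE_I2) simp
qed

locale elliptic_coefficient =
  fixes \<alpha> \<beta> R :: real and \<A> :: "real^'d \<Rightarrow> real^'d^'d"
  assumes alpha_pos: "0 < \<alpha>" and alpha_le_beta: "\<alpha> \<le> \<beta>" and radius_pos: "0 < R"
    and coeff_measurable: "\<A> \<in> borel_measurable lebesgue"
    and coeff_Mab: "AE x in lebesgue. \<A> x \<in> Mab \<alpha> \<beta>"
begin

lemma measure_ball_pos: "0 < measure lebesgue (ball (0::real^'d) R)"
  using content_ball_pos[OF radius_pos, of "0::real^'d"] by simp

lemma set_integrable_coeff_quadratic_form:
  fixes g :: "real^'d \<Rightarrow> real^'d"
  assumes g: "g \<in> borel_measurable lebesgue" "integrable lebesgue (\<lambda>x. (norm (g x))\<^sup>2)"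
  shows "set_integrable lebesgue (ball 0 R) (\<lambda>x. (p + g x) \<bullet> (\<A> x *v (p + g x)))"
proof (rule set_integrable_bound)
  show "set_integrable lebesgue (ball 0 R) (\<lambda>x. 2 * \<beta> * (norm p)\<^sup>2 + 2 * \<beta> * (norm (g x))\<^sup>2)"
    using g(2) lebesgue_ball_finite by (intro set_integrable_const_add_square_norm)
  show "set_borel_measurable lebesgue (ball 0 R) (\<lambda>x. (p + g x) \<bullet> (\<A> x *v (p + g x)))"
    unfolding set_borel_measurable_def using g(1) coeff_measurable lebesgue_ball_finite(1) by measurable
  show "AE x in lebesgue. x \<in> ball 0 R \<longrightarrow>
      norm ((p + g x) \<bullet> (\<A> x *v (p + g x))) \<le> norm (2 * \<beta> * (norm p)\<^sup>2 + 2 * \<beta> * (norm (g x))\<^sup>2)"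
    using coeff_Mab
  proof eventually_elim
    case (elim x)
    have "0 \<le> \<alpha> * (norm (p + g x))\<^sup>2" using alpha_pos by simp
    then have "\<bar>(p + g x) \<bullet> (\<A> x *v (p + g x))\<bar> \<le> \<beta> * (norm (p + g x))\<^sup>2"
      using Mab_bounds[OF elim, of "p + g x"] by linarith
    also have "\<dots> \<le> \<beta> * (norm p + norm (g x))\<^sup>2"
      using alpha_pos alpha_le_beta by (intro mult_left_mono power_mono norm_triangle_ineq) auto
    also have "\<dots> \<le> \<beta> * (2 * (norm p)\<^sup>2 + 2 * (norm (g x))\<^sup>2)"
      using alpha_pos alpha_le_beta by (intro mult_left_mono square_add_le) auto
    finally show ?case using alpha_pos alpha_le_beta by (simp add: algebra_simps)
  qed
qed

lemma Jfun_eq_integral: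
  fixes g :: "real^'d \<Rightarrow> real^'d"
  assumes A: "A \<in> Mab \<alpha> \<beta>" and V: "in_V0 v g"
  shows "integrable lebesgue (energy_density R \<A> A p g)"
    and "Jfun R \<A> A p v g
      = (LINT x|lebesgue. energy_density R \<A> A p g x) / (2 * measure lebesgue (ball (0::real^'d) R))"
proof -
  define B where "B = ball (0::real^'d) R"
  have g: "g \<in> borel_measurable lebesgue" "integrable lebesgue (\<lambda>x. (norm (g x))\<^sup>2)"
    using in_V0_gradient_square_integrable[OF V] by auto
  have i1: "integrable lebesgue (\<lambda>x. indicator B x * ((p + g x) \<bullet> (\<A> x *v (p + g x))))"
    using set_integrable_coeff_quadratic_form[OF g] unfolding set_integrable_def B_def by simp
  have "integrable lebesgue (\<lambda>x. indicator B x * ((A *v p) \<bullet> g x))"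
    using set_integrable_inner[OF lebesgue_ball_finite g, of 0 R "A *v p"] unfolding set_integrable_def B_def by simp
  then have i2: "integrable lebesgue (\<lambda>x. 2 * (indicator B x * ((A *v p) \<bullet> g x)))" by simp
  have i3: "integrable lebesgue (\<lambda>x. indicator (UNIV - B) x * (g x \<bullet> (A *v g x)))"
    using integrable_mult_indicator[OF _ integrable_quadratic_form[OF A _ g]] lebesgue_ball_finite(1) alpha_pos
    by (simp add: B_def)
  have split: "energy_density R \<A> A p g = (\<lambda>x. indicator B x * ((p + g x) \<bullet> (\<A> x *v (p + g x)))
      - 2 * (indicator B x * ((A *v p) \<bullet> g x)) + indicator (UNIV - B) x * (g x \<bullet> (A *v g x)))"
    by (auto simp: fun_eq_iff energy_density_def B_def split: split_indicator)
  show "integrable lebesgue (energy_density R \<A> A p g)"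
    unfolding split using i1 i2 i3 by auto
  have integral_split: "(LINT x|lebesgue. energy_density R \<A> A p g x)
      = (LINT x:B|lebesgue. (p + g x) \<bullet> (\<A> x *v (p + g x))) - 2 * (LINT x:B|lebesgue. (A *v p) \<bullet> g x)
        + (LINT x:UNIV - B|lebesgue. g x \<bullet> (A *v g x))"
    unfolding split set_lebesgue_integral_def using i1 i2 i3 by simp
  show "Jfun R \<A> A p v g
      = (LINT x|lebesgue. energy_density R \<A> A p g x) / (2 * measure lebesgue (ball (0::real^'d) R))"
    unfolding Jfun_def Let_def B_def[symmetric] integral_split using measure_ball_pos by (simp add: B_def field_simps)
qed

lemma Jfun_parallelogram:
  assumes A: "A \<in> Mab \<alpha> \<beta>" and V: "in_V0 v g" "in_V0 w h"
  shows "Jfun R \<A> A (p + p') (\<lambda>x. v x + w x) (\<lambda>x. g x + h x)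
      + Jfun R \<A> A (p - p') (\<lambda>x. v x - w x) (\<lambda>x. g x - h x)
    = 2 * Jfun R \<A> A p v g + 2 * Jfun R \<A> A p' w h"
proof -
  note plus = Jfun_eq_integral[OF A in_V0_add[OF V], of "p + p'"]
    and minus = Jfun_eq_integral[OF A in_V0_diff[OF V], of "p - p'"]
    and J1 = Jfun_eq_integral[OF A V(1), of p] and J2 = Jfun_eq_integral[OF A V(2), of p']
  have "(LINT x|lebesgue. energy_density R \<A> A (p + p') (\<lambda>x. g x + h x) x)
      + (LINT x|lebesgue. energy_density R \<A> A (p - p') (\<lambda>x. g x - h x) x)
    = (LINT x|lebesgue. energy_density R \<A> A (p + p') (\<lambda>x. g x + h x) x
      + energy_density R \<A> A (p - p') (\<lambda>x. g x - h x) x)"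
    using plus(1) minus(1) by simp
  also have "\<dots> = (LINT x|lebesgue. 2 * energy_density R \<A> A p g x + 2 * energy_density R \<A> A p' h x)"
    by (simp only: energy_density_parallelogram)
  also have "\<dots> = 2 * (LINT x|lebesgue. energy_density R \<A> A p g x)
      + 2 * (LINT x|lebesgue. energy_density R \<A> A p' h x)"
    using J1(1) J2(1) by simp
  finally show ?thesis
    unfolding plus(2) minus(2) J1(2) J2(2) using measure_ball_pos by (simp add: field_simps)
qed

lemma Jfun_scaleR:
  assumes A: "A \<in> Mab \<alpha> \<beta>" and V: "in_V0 v g"
  shows "Jfun R \<A> A (c *\<^sub>R p) (\<lambda>x. c * v x) (\<lambda>x. c *\<^sub>R g x) = c\<^sup>2 * Jfun R \<A> A p v g"
  unfolding Jfun_eq_integral(2)[OF A in_V0_scale[OF V]] Jfun_eq_integral(2)[OF A V] energy_density_scaleR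
  by simp

lemma Jfun_convex_combination:
  assumes A: "A1 \<in> Mab \<alpha> \<beta>" "A2 \<in> Mab \<alpha> \<beta>" and V: "in_V0 v g"
    and uw: "0 \<le> u" "0 \<le> w" "u + w = 1"
  shows "Jfun R \<A> (u *\<^sub>R A1 + w *\<^sub>R A2) p v g = u * Jfun R \<A> A1 p v g + w * Jfun R \<A> A2 p v g"
proof -
  have "u *\<^sub>R A1 + w *\<^sub>R A2 \<in> Mab \<alpha> \<beta>" using convex_Mab A uw by (rule convexD)
  then show ?thesis
    using Jfun_eq_integral(1)[OF A(1) V] Jfun_eq_integral(1)[OF A(2) V] A
    by (simp add: Jfun_eq_integral(2)[OF _ V] energy_density_convex_combination[OF uw(3)] add_divide_distrib)
qed

lemma Jfun_lower_bound:
  assumes A: "A \<in> Mab \<alpha> \<beta>" and V: "in_V0 v g"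
  shows "- ((norm (A *v p))\<^sup>2 / (2 * \<alpha>)) \<le> Jfun R \<A> A p v g"
proof -
  let ?c = "(norm (A *v p))\<^sup>2 / \<alpha>"
  have "(LINT x|lebesgue. - indicator (ball (0::real^'d) R) x * ?c) \<le> (LINT x|lebesgue. energy_density R \<A> A p g x)"
  proof (rule integral_mono_AE)
    show "integrable lebesgue (\<lambda>x. - indicator (ball (0::real^'d) R) x * ?c)"
      by (intro integrable_mult_left integrable_minus integrable_indicator_ball)
    show "integrable lebesgue (energy_density R \<A> A p g)" by (rule Jfun_eq_integral(1)[OF A V])
    show "AE x in lebesgue. - indicator (ball (0::real^'d) R) x * ?c \<le> energy_density R \<A> A p g x"
      using coeff_Mab by eventually_elim (rule energy_density_lower_bound[OF alpha_pos _ A])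
  qed
  then have "- measure lebesgue (ball (0::real^'d) R) * ?c \<le> (LINT x|lebesgue. energy_density R \<A> A p g x)"
    by simp
  then show ?thesis
    unfolding Jfun_eq_integral(2)[OF A V] using measure_ball_pos by (simp add: field_simps)
qed

lemma Jfun_zero_upper_bound:
  assumes A: "A \<in> Mab \<alpha> \<beta>"
  shows "Jfun R \<A> A p (\<lambda>x. 0) (\<lambda>x. 0) \<le> \<beta> * (norm p)\<^sup>2 / 2"
proof -
  have "(LINT x|lebesgue. energy_density R \<A> A p (\<lambda>x. 0) x) \<le> (LINT x|lebesgue. indicator (ball (0::real^'d) R) x * (\<beta> * (norm p)\<^sup>2))"
  proof (rule integral_mono_AE)
    show "integrable lebesgue (energy_density R \<A> A p (\<lambda>x. 0))" by (rule Jfun_eq_integral(1)[OF A in_V0_zero])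
    show "integrable lebesgue (\<lambda>x. indicator (ball (0::real^'d) R) x * (\<beta> * (norm p)\<^sup>2))"
      by (intro integrable_mult_left integrable_indicator_ball)
    show "AE x in lebesgue. energy_density R \<A> A p (\<lambda>x. 0) x \<le> indicator (ball (0::real^'d) R) x * (\<beta> * (norm p)\<^sup>2)"
      using coeff_Mab by eventually_elim (auto simp: energy_density_def Mab_bounds)
  qed
  then have "(LINT x|lebesgue. energy_density R \<A> A p (\<lambda>x. 0) x) \<le> measure lebesgue (ball (0::real^'d) R) * (\<beta> * (norm p)\<^sup>2)"
    by simp
  then show ?thesis
    unfolding Jfun_eq_integral(2)[OF A in_V0_zero] using measure_ball_pos by (simp add: field_simps)
qed

section \<open>The minimal energy and the matrix \<open>G\<close>\<close>

lemma Jmin_le_Jfun: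
  assumes A: "A \<in> Mab \<alpha> \<beta>" and V: "in_V0 v g"
  shows "Jmin R \<A> p A \<le> Jfun R \<A> A p v g"
  unfolding Jmin_def
proof (rule cInf_lower)
  show "Jfun R \<A> A p v g \<in> {Jfun R \<A> A p v g | v g. in_V0 v g}" using V by blast
  show "bdd_below {Jfun R \<A> A p v g | v g. in_V0 v g}"
    using Jfun_lower_bound[OF A] by (intro bdd_belowI[of _ "- ((norm (A *v p))\<^sup>2 / (2 * \<alpha>))"]) blast
qed

lemma Jmin_greatest:
  assumes "\<And>v g. in_V0 v g \<Longrightarrow> c \<le> Jfun R \<A> A p v g"
  shows "c \<le> Jmin R \<A> p A"
  unfolding Jmin_def using in_V0_zero assms by (intro cInf_greatest) blast+

lemma Jmin_bounds:
  assumes A: "A \<in> Mab \<alpha> \<beta>"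
  shows "- ((norm (A *v p))\<^sup>2 / (2 * \<alpha>)) \<le> Jmin R \<A> p A" and "Jmin R \<A> p A \<le> \<beta> * (norm p)\<^sup>2 / 2"
proof -
  show "- ((norm (A *v p))\<^sup>2 / (2 * \<alpha>)) \<le> Jmin R \<A> p A"
    by (rule Jmin_greatest[OF Jfun_lower_bound[OF A]])
  show "Jmin R \<A> p A \<le> \<beta> * (norm p)\<^sup>2 / 2"
    using Jmin_le_Jfun[OF A in_V0_zero, of p] Jfun_zero_upper_bound[OF A, of p] by linarith
qed

lemma Jmin_parallelogram_le:
  assumes A: "A \<in> Mab \<alpha> \<beta>"
  shows "Jmin R \<A> (x + y) A + Jmin R \<A> (x - y) A \<le> 2 * Jmin R \<A> x A + 2 * Jmin R \<A> y A"
proof -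
  let ?q = "\<lambda>p. Jmin R \<A> p A"
  have key: "?q (x + y) + ?q (x - y) \<le> 2 * Jfun R \<A> A x v g + 2 * Jfun R \<A> A y w h"
    if V: "in_V0 v g" "in_V0 w h" for v g w h
    using add_mono[OF Jmin_le_Jfun[OF A in_V0_add[OF V], of "x + y"] Jmin_le_Jfun[OF A in_V0_diff[OF V], of "x - y"]]
    unfolding Jfun_parallelogram[OF A V] .
  txt \<open>Minimise the right-hand side of \<open>key\<close> first over \<open>(v, g)\<close>, then over \<open>(w, h)\<close>.\<close>
  have "(?q (x + y) + ?q (x - y) - 2 * ?q x) / 2 \<le> Jfun R \<A> A y w h" if W: "in_V0 w h" for w h
  proof -
    have "(?q (x + y) + ?q (x - y) - 2 * Jfun R \<A> A y w h) / 2 \<le> ?q x"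
      using key[OF _ W] by (intro Jmin_greatest) force
    then show ?thesis by argo
  qed
  then have "(?q (x + y) + ?q (x - y) - 2 * ?q x) / 2 \<le> ?q y" by (rule Jmin_greatest)
  then show ?thesis by argo
qed

lemma Jmin_scaleR_le:
  assumes A: "A \<in> Mab \<alpha> \<beta>" and c: "c \<noteq> 0"
  shows "Jmin R \<A> (c *\<^sub>R p) A \<le> c\<^sup>2 * Jmin R \<A> p A"
proof -
  have c2: "0 < c\<^sup>2" using c by simp
  have "Jmin R \<A> (c *\<^sub>R p) A / c\<^sup>2 \<le> Jmin R \<A> p A"
  proof (rule Jmin_greatest)
    fix v :: "real^'d \<Rightarrow> real" and g :: "real^'d \<Rightarrow> real^'d"
    assume V: "in_V0 v g"
    have "Jmin R \<A> (c *\<^sub>R p) A \<le> c\<^sup>2 * Jfun R \<A> A p v g"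
      using Jmin_le_Jfun[OF A in_V0_scale[OF V, of c], of "c *\<^sub>R p"] unfolding Jfun_scaleR[OF A V] .
    then show "Jmin R \<A> (c *\<^sub>R p) A / c\<^sup>2 \<le> Jfun R \<A> A p v g"
      using c2 by (simp add: divide_le_eq mult.commute)
  qed
  then show ?thesis using c2 by (simp add: divide_le_eq mult.commute)
qed

lemma Jmin_scaleR:
  assumes A: "A \<in> Mab \<alpha> \<beta>"
  shows "Jmin R \<A> (c *\<^sub>R p) A = c\<^sup>2 * Jmin R \<A> p A"
proof (cases "c = 0")
  case True
  then show ?thesis using Jmin_bounds[OF A, of 0] by simp
next
  case False
  have "Jmin R \<A> p A \<le> (1 / c)\<^sup>2 * Jmin R \<A> (c *\<^sub>R p) A"
    using Jmin_scaleR_le[OF A, of "1 / c" "c *\<^sub>R p"] False by simp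
  then have "c\<^sup>2 * Jmin R \<A> p A \<le> Jmin R \<A> (c *\<^sub>R p) A"
    using False by (simp add: power_divide field_simps)
  then show ?thesis using Jmin_scaleR_le[OF A False, of p] by linarith
qed

lemma Jmin_parallelogram:
  assumes A: "A \<in> Mab \<alpha> \<beta>"
  shows "Jmin R \<A> (x + y) A + Jmin R \<A> (x - y) A = 2 * Jmin R \<A> x A + 2 * Jmin R \<A> y A"
proof -
  txt \<open>The reverse inequality is the same one applied to \<open>x + y\<close> and \<open>x - y\<close>.\<close>
  have "(x + y) + (x - y) = (2::real) *\<^sub>R x" "(x + y) - (x - y) = (2::real) *\<^sub>R y"
    by (simp_all add: scaleR_2)
  then have "4 * Jmin R \<A> x A + 4 * Jmin R \<A> y A \<le> 2 * Jmin R \<A> (x + y) A + 2 * Jmin R \<A> (x - y) A"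
    using Jmin_parallelogram_le[OF A, of "x + y" "x - y"] Jmin_scaleR[OF A, of 2] by simp
  then show ?thesis using Jmin_parallelogram_le[OF A, of x y] by linarith
qed

lemma Jmin_quadratic_bound:
  assumes A: "A \<in> Mab \<alpha> \<beta>"
  obtains K where "\<And>p. \<bar>Jmin R \<A> p A\<bar> \<le> K * (norm p)\<^sup>2"
proof -
  obtain K where K: "\<And>p. norm (A *v p) \<le> norm p * K"
    using bounded_linear.bounded[OF matrix_vector_mul_bounded_linear[of A]] by blast
  have "\<bar>Jmin R \<A> p A\<bar> \<le> (\<beta> / 2 + K\<^sup>2 / (2 * \<alpha>)) * (norm p)\<^sup>2" for p
  proof -
    have "(norm (A *v p))\<^sup>2 \<le> (norm p * K)\<^sup>2" using K[of p] by (intro power_mono) auto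
    then have "(norm (A *v p))\<^sup>2 / (2 * \<alpha>) \<le> K\<^sup>2 / (2 * \<alpha>) * (norm p)\<^sup>2"
      using alpha_pos by (simp add: divide_right_mono power_mult_distrib mult.commute)
    moreover have "0 \<le> K\<^sup>2 / (2 * \<alpha>) * (norm p)\<^sup>2" "0 \<le> \<beta> * (norm p)\<^sup>2 / 2"
      using alpha_pos alpha_le_beta by auto
    ultimately show ?thesis using Jmin_bounds[OF A, of p] by (simp add: abs_le_iff algebra_simps)
  qed
  then show ?thesis using that by blast
qed

lemma Gmat_quadratic_form:
  assumes A: "A \<in> Mab \<alpha> \<beta>"
  shows "1/2 * (p \<bullet> (Gmat R \<A> A *v p)) = Jmin R \<A> p A"
proof -
  obtain K where "\<And>p. \<bar>Jmin R \<A> p A\<bar> \<le> K * (norm p)\<^sup>2" using Jmin_quadratic_bound[OF A] by blast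
  then have "transpose (Gmat R \<A> A) = Gmat R \<A> A \<and> (\<forall>p. 1/2 * (p \<bullet> (Gmat R \<A> A *v p)) = Jmin R \<A> p A)"
    unfolding Gmat_def by (rule theI'[OF ex1_symmetric_matrix_quadratic_form[OF Jmin_parallelogram[OF A]]])
  then show ?thesis by blast
qed

lemma trace_Gmat: "A \<in> Mab \<alpha> \<beta> \<Longrightarrow> trace (Gmat R \<A> A) = (\<Sum>i\<in>UNIV. 2 * Jmin R \<A> (axis i 1) A)"
  using Gmat_quadratic_form[of A "axis _ 1"]
  by (simp add: trace_def inner_axis' matrix_vector_mul_component inner_axis mult.commute)

lemma concave_Jmin: "concave_on (Mab \<alpha> \<beta>) (Jmin R \<A> p)"
  unfolding concave_on_iff
proof (intro conjI ballI allI impI convex_Mab)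
  fix A1 A2 :: "real^'d^'d" and u w :: real
  assume A: "A1 \<in> Mab \<alpha> \<beta>" "A2 \<in> Mab \<alpha> \<beta>" and uw: "0 \<le> u" "0 \<le> w" "u + w = 1"
  show "u * Jmin R \<A> p A1 + w * Jmin R \<A> p A2 \<le> Jmin R \<A> p (u *\<^sub>R A1 + w *\<^sub>R A2)"
  proof (rule Jmin_greatest)
    fix v :: "real^'d \<Rightarrow> real" and g :: "real^'d \<Rightarrow> real^'d"
    assume V: "in_V0 v g"
    have "u * Jmin R \<A> p A1 + w * Jmin R \<A> p A2 \<le> u * Jfun R \<A> A1 p v g + w * Jfun R \<A> A2 p v g"
      using Jmin_le_Jfun[OF A(1) V] Jmin_le_Jfun[OF A(2) V] uw by (intro add_mono mult_left_mono) auto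
    then show "u * Jmin R \<A> p A1 + w * Jmin R \<A> p A2 \<le> Jfun R \<A> (u *\<^sub>R A1 + w *\<^sub>R A2) p v g"
      unfolding Jfun_convex_combination[OF A V uw] .
  qed
qed

end

theorem lemma1:
  fixes \<alpha> \<beta> R :: real and \<A> :: "real^'d \<Rightarrow> real^'d^'d"
  assumes "0 < \<alpha>" and "\<alpha> \<le> \<beta>" and "0 < R"
    and "\<A> \<in> borel_measurable lebesgue"
    and "AE x in lebesgue. \<A> x \<in> Mab \<alpha> \<beta>"
  shows "concave_on (Mab \<alpha> \<beta>) (\<lambda>A. trace (Gmat R \<A> A))"
proof -
  interpret elliptic_coefficient \<alpha> \<beta> R \<A> using assms by unfold_locales
  have "concave_on (Mab \<alpha> \<beta>) (\<lambda>A. \<Sum>i\<in>UNIV. 2 * Jmin R \<A> (axis i 1) A)"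
    using convex_Mab concave_Jmin by (intro concave_on_sum_functions concave_on_cmul) auto
  moreover have "concave_on (Mab \<alpha> \<beta>) (\<lambda>A. trace (Gmat R \<A> A))
      \<longleftrightarrow> concave_on (Mab \<alpha> \<beta>) (\<lambda>A. \<Sum>i\<in>UNIV. 2 * Jmin R \<A> (axis i 1) A)"
    using trace_Gmat convex_Mab by (auto simp: concave_on_iff convexD)
  ultimately show ?thesis by blast
qed

end
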